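(* Let $d\colon A\to B$ be a homomorphism of finite abelian groups. Then the set of maximal elements of $\operatorname{Dec}_\mathcal{I}(d)$ equals one orbit of $\operatorname{Dec}_\mathcal{I}(d)$ under the action of $U^*(d)$.
   Context: A restriction of $d$ is a homomorphism $d'\colon A'\to B'$ with $A'\subset A$, $B'\subset B$ subgroups and $d'(a)=d(a)$ for $a\in A'$ (so $d(A')\subset B'$). $\operatorname{Dec}(d)$ is the set of pairs $(d_0,d_1)$ of restrictions $d_i\colon A_i\to B_i$ of $d$ with $A_0\oplus A_1=A$ and $B_0\oplus B_1=B$ (internal direct sums), partially ordered by $(d_0,d_1)\leq(d_0',d_1')$ iff there is a restriction $c\colon C\to D$ of $d$ with $A_0=A_0'\oplus C$, $B_0=B_0'\oplus D$, $A_1\oplus C=A_1'$, $B_1\oplus D=B_1'$. $\operatorname{Dec}_\mathcal{I}(d)$ is the subset of $(d_0,d_1)\in\operatorname{Dec}(d)$ with $d_1$ an isomorphism, with the induced order. $Q(d)=\mathbb{Z}\oplus\operatorname{Hom}(B,A)$ is the ring with multiplication $(m,f)\star(n,g)=(mn,mg+nf+f\circ d\circ g)$; $U(d)=1+\operatorname{Hom}(B,A)$ and $U^*(d)=U(d)\cap Q(d)^*$, a group. $U^*(d)$ acts on $d$ via the homomorphism $1+f\mapsto(\mathrm{id}_A+f\circ d,\ \mathrm{id}_B+d\circ f)$ into the group of pairs $(\alpha,\beta)\in\operatorname{Aut}(A)\times\operatorname{Aut}(B)$ with $\beta d=d\alpha$, and such a pair acts on $\operatorname{Dec}(d)$ by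 sending $(d_i\colon A_i\to B_i)_{i=0,1}$ to the restrictions $\alpha(A_i)\to\beta(B_i)$. *)

theory Defs
  imports Main
begin

text \<open>Finite abelian groups A, B are modelled as finite types of class ab_group_add.
 A restriction of d is determined by the pair of subgroups (A', B') with d(A') in B'.\<close>

definition is_hom :: "('x::ab_group_add \<Rightarrow> 'y::ab_group_add) \<Rightarrow> bool" where
  "is_hom h \<longleftrightarrow> (\<forall>x y. h (x + y) = h x + h y)"

definition subgrp :: "'x::ab_group_add set \<Rightarrow> bool" where
  "subgrp S \<longleftrightarrow> 0 \<in> S \<and> (\<forall>x\<in>S. \<forall>y\<in>S. x + y \<in> S) \<and> (\<forall>x\<in>S. - x \<in> S)"

definition is_restriction ::
  "('a::ab_group_add \<Rightarrow> 'b::ab_group_add) \<Rightarrow> 'a set \<times> 'b set \<Rightarrow> bool" where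
  "is_restriction d r \<longleftrightarrow> subgrp (fst r) \<and> subgrp (snd r) \<and> d ` fst r \<subseteq> snd r"

definition int_dsum :: "'x::ab_group_add set \<Rightarrow> 'x set \<Rightarrow> 'x set \<Rightarrow> bool" where
  "int_dsum X Y Z \<longleftrightarrow> X \<inter> Y = {0} \<and> {x + y | x y. x \<in> X \<and> y \<in> Y} = Z"

definition Dec ::
  "('a::ab_group_add \<Rightarrow> 'b::ab_group_add) \<Rightarrow> (('a set \<times> 'b set) \<times> ('a set \<times> 'b set)) set" where
  "Dec d = {((A0, B0), (A1, B1)). is_restriction d (A0, B0) \<and> is_restriction d (A1, B1)
            \<and> int_dsum A0 A1 UNIV \<and> int_dsum B0 B1 UNIV}"

definition dec_le ::
  "('a::ab_group_add \<Rightarrow> 'b::ab_group_add) \<Rightarrow> ('a set \<times> 'b set) \<times> ('a set \<times> 'b set)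
     \<Rightarrow> ('a set \<times> 'b set) \<times> ('a set \<times> 'b set) \<Rightarrow> bool" where
  "dec_le d x y \<longleftrightarrow>
     (case x of ((A0, B0), (A1, B1)) \<Rightarrow> case y of ((A0', B0'), (A1', B1')) \<Rightarrow>
       (\<exists>C D. is_restriction d (C, D) \<and> int_dsum A0' C A0 \<and> int_dsum B0' D B0
              \<and> int_dsum A1 C A1' \<and> int_dsum B1 D B1'))"

definition Dec_I ::
  "('a::ab_group_add \<Rightarrow> 'b::ab_group_add) \<Rightarrow> (('a set \<times> 'b set) \<times> ('a set \<times> 'b set)) set" where
  "Dec_I d = {x \<in> Dec d. bij_betw d (fst (snd x)) (snd (snd x))}"

definition Dec_I_max ::
  "('a::ab_group_add \<Rightarrow> 'b::ab_group_add) \<Rightarrow> (('a set \<times> 'b set) \<times> ('a set \<times> 'b set)) set" where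
  "Dec_I_max d = {x \<in> Dec_I d. \<forall>y \<in> Dec_I d. dec_le d x y \<longrightarrow> y = x}"

definition zsmul :: "int \<Rightarrow> 'x::ab_group_add \<Rightarrow> 'x" where
  "zsmul k x = (if 0 \<le> k then (((+) x) ^^ nat k) 0 else - ((((+) x) ^^ nat (- k)) 0))"

text \<open>The ring Q(d) = Z (+) Hom(B,A).\<close>
definition Q_carrier :: "(int \<times> ('b::ab_group_add \<Rightarrow> 'a::ab_group_add)) set" where
  "Q_carrier = {q. is_hom (snd q)}"

definition qmult ::
  "('a::ab_group_add \<Rightarrow> 'b::ab_group_add) \<Rightarrow> int \<times> ('b \<Rightarrow> 'a) \<Rightarrow> int \<times> ('b \<Rightarrow> 'a) \<Rightarrow> int \<times> ('b \<Rightarrow> 'a)" where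
  "qmult d p q = (case p of (m, f) \<Rightarrow> case q of (n, g) \<Rightarrow>
      (m * n, \<lambda>b. zsmul m (g b) + zsmul n (f b) + f (d (g b))))"

definition qone :: "int \<times> ('b \<Rightarrow> 'a::ab_group_add)" where
  "qone = (1, \<lambda>_. 0)"

definition Ustar ::
  "('a::ab_group_add \<Rightarrow> 'b::ab_group_add) \<Rightarrow> (int \<times> ('b \<Rightarrow> 'a)) set" where
  "Ustar d = {q \<in> Q_carrier. fst q = 1 \<and>
                 (\<exists>r \<in> Q_carrier. qmult d q r = qone \<and> qmult d r q = qone)}"

definition act ::
  "('a::ab_group_add \<Rightarrow> 'b::ab_group_add) \<Rightarrow> int \<times> ('b \<Rightarrow> 'a)
     \<Rightarrow> ('a set \<times> 'b set) \<times> ('a set \<times> 'b set) \<Rightarrow> ('a set \<times> 'b set) \<times> ('a set \<times> 'b set)" where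
  "act d q x = (let f = snd q; \<alpha> = (\<lambda>a. a + f (d a)); \<beta> = (\<lambda>b. b + d (f b)) in
     case x of ((A0, B0), (A1, B1)) \<Rightarrow> ((\<alpha> ` A0, \<beta> ` B0), (\<alpha> ` A1, \<beta> ` B1)))"

end

theory Submission
  imports Defs HOL.Modules
begin

(*
  The action of U*(d) preserves Dec_I(d) and the order of the isomorphism part A1, and an
  element whose A1 has maximal order is maximal, since going up in the order enlarges A1.  So
  the orbit of such an element consists of maximal elements, and it remains to show that any
  two maximal elements (A0, B0, A1, B1) and (A0', B0', A1', B1') are conjugate.

  First, A0 \<inter> A1' = 0.  Write \<pi>(X) for the projection onto X along its complementary summand.
  The endomorphism \<phi> = \<pi>(A0) \<pi>(A1') of A is intertwined by d with the analogous \<psi> on B and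
  kills ker d, so for a power p = \<phi>^N that is idempotent (A is finite), d maps im p
  isomorphically onto im \<psi>^N.  Splitting A0 = ker p \<oplus> im p and moving im p into
  the isomorphism part gives a larger element, so p = 0 by maximality; but p is the identity
  on A0 \<inter> A1'.  Symmetrically A1 \<inter> A0' = 0, so \<alpha> = \<pi>(A0') \<pi>(A0) + \<pi>(A1') \<pi>(A1) is an
  automorphism of A carrying A0, A1 onto A0', A1'.  If s, s' invert d on the isomorphism
  parts, then f = - (s' \<pi>(B0) + \<pi>(A0') s) satisfies \<alpha> = id + f d, the map id + d f is the
  analogous automorphism of B, and the bijectivity of id + f d makes 1 + f a unit of Q(d).
*)

section \<open>Additive subgroups and homomorphisms\<close>

lemma is_hom_additive: "is_hom h \<Longrightarrow> additive h"
  by (simp add: is_hom_def additive_def)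

lemma hom_add: "is_hom h \<Longrightarrow> h (x + y) = h x + h y"
  by (simp add: is_hom_def)

lemma hom_zero: "is_hom h \<Longrightarrow> h 0 = 0"
  by (rule additive.zero[OF is_hom_additive])

lemma hom_uminus: "is_hom h \<Longrightarrow> h (- x) = - h x"
  by (rule additive.minus[OF is_hom_additive])

lemma hom_diff: "is_hom h \<Longrightarrow> h (x - y) = h x - h y"
  by (rule additive.diff[OF is_hom_additive])

lemma hom_comp: "is_hom h \<Longrightarrow> is_hom g \<Longrightarrow> is_hom (h \<circ> g)"
  by (simp add: is_hom_def)

lemma hom_funpow:
  fixes h :: "'x::ab_group_add \<Rightarrow> 'x"
  shows "is_hom h \<Longrightarrow> is_hom (h ^^ n)"
  by (induction n) (simp_all add: is_hom_def)

lemma hom_inv: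
  assumes "is_hom h" "bij h"
  shows "is_hom (inv h)"
  unfolding is_hom_def
proof (intro allI)
  fix x y
  have "h (inv h x + inv h y) = x + y"
    using assms by (simp add: hom_add bij_is_surj surj_f_inv_f)
  then show "inv h (x + y) = inv h x + inv h y"
    using assms(2) by (metis bij_is_inj inv_f_f)
qed

lemma funpow_commute:
  assumes "\<And>v. d (\<phi> v) = \<psi> (d v)"
  shows "d ((\<phi> ^^ n) v) = (\<psi> ^^ n) (d v)"
  by (induction n) (simp_all add: assms)

lemma subgrp_0: "subgrp S \<Longrightarrow> 0 \<in> S"
  by (simp add: subgrp_def)

lemma subgrp_add: "subgrp S \<Longrightarrow> x \<in> S \<Longrightarrow> y \<in> S \<Longrightarrow> x + y \<in> S"
  by (simp add: subgrp_def)

lemma subgrp_uminus: "subgrp S \<Longrightarrow> x \<in> S \<Longrightarrow> - x \<in> S"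
  by (simp add: subgrp_def)

lemma subgrp_diff: "subgrp S \<Longrightarrow> x \<in> S \<Longrightarrow> y \<in> S \<Longrightarrow> x - y \<in> S"
  by (metis diff_conv_add_uminus subgrp_add subgrp_uminus)

lemma subgrp_UNIV: "subgrp UNIV"
  by (simp add: subgrp_def)

lemma subgrp_zero: "subgrp {0}"
  by (simp add: subgrp_def)

lemma subgrp_image:
  assumes "is_hom h" "subgrp S"
  shows "subgrp (h ` S)"
  unfolding subgrp_def
proof (intro conjI ballI)
  show "0 \<in> h ` S"
    using assms by (metis hom_zero imageI subgrp_0)
  show "x + y \<in> h ` S" if "x \<in> h ` S" "y \<in> h ` S" for x y
    using that assms by (auto simp flip: hom_add[OF assms(1)] intro: subgrp_add)
  show "- x \<in> h ` S" if "x \<in> h ` S" for x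
    using that assms by (auto simp flip: hom_uminus[OF assms(1)] intro: subgrp_uminus)
qed

lemma subgrp_range: "is_hom h \<Longrightarrow> subgrp (range h)"
  by (rule subgrp_image[OF _ subgrp_UNIV])

lemma subgrp_kernel: "is_hom h \<Longrightarrow> subgrp S \<Longrightarrow> subgrp {v \<in> S. h v = 0}"
  unfolding subgrp_def by (auto simp: hom_zero hom_add hom_uminus)

lemma subgrp_sumset:
  assumes "subgrp X" "subgrp Y"
  shows "subgrp {x + y | x y. x \<in> X \<and> y \<in> Y}"
  unfolding subgrp_def
proof (intro conjI ballI)
  show "0 \<in> {x + y | x y. x \<in> X \<and> y \<in> Y}"
    using assms by (metis (mono_tags, lifting) add_0 mem_Collect_eq subgrp_0)
next
  fix v w assume "v \<in> {x + y | x y. x \<in> X \<and> y \<in> Y}" "w \<in> {x + y | x y. x \<in> X \<and> y \<in> Y}"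
  then obtain x y x' y' where "v = x + y" "w = x' + y'" "x \<in> X" "y \<in> Y" "x' \<in> X" "y' \<in> Y"
    by blast
  moreover have "v + w = (x + x') + (y + y')"
    using calculation by (simp add: algebra_simps)
  ultimately show "v + w \<in> {x + y | x y. x \<in> X \<and> y \<in> Y}"
    using assms subgrp_add by blast
next
  fix v assume "v \<in> {x + y | x y. x \<in> X \<and> y \<in> Y}"
  then obtain x y where "v = x + y" "x \<in> X" "y \<in> Y"
    by blast
  moreover have "- v = - x + - y"
    using calculation by simp
  ultimately show "- v \<in> {x + y | x y. x \<in> X \<and> y \<in> Y}"
    using assms subgrp_uminus by blast
qed

lemma hom_inj_on:
  assumes "is_hom h" "subgrp S" "\<And>v. v \<in> S \<Longrightarrow> h v = 0 \<Longrightarrow> v = 0"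
  shows "inj_on h S"
proof (rule inj_onI)
  fix u v assume "u \<in> S" "v \<in> S" "h u = h v"
  then have "h (u - v) = 0" "u - v \<in> S"
    using assms(1,2) by (simp_all add: hom_diff subgrp_diff)
  then show "u = v"
    using assms(3) by fastforce
qed

lemma int_dsum_commute: "int_dsum X Y Z \<Longrightarrow> int_dsum Y X Z"
  unfolding int_dsum_def by (auto simp: Int_commute) (metis add.commute)+

lemma int_dsum_inter_zero: "int_dsum X Y Z \<Longrightarrow> v \<in> X \<Longrightarrow> v \<in> Y \<Longrightarrow> v = 0"
  unfolding int_dsum_def by blast

lemma int_dsum_decompose: "int_dsum X Y Z \<Longrightarrow> v \<in> Z \<Longrightarrow> \<exists>x y. v = x + y \<and> x \<in> X \<and> y \<in> Y"
  unfolding int_dsum_def by blast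

lemma int_dsum_subset_left: "int_dsum X Y Z \<Longrightarrow> subgrp Y \<Longrightarrow> X \<subseteq> Z"
  unfolding int_dsum_def by (force dest: subgrp_0)

lemma int_dsum_subset_right: "int_dsum X Y Z \<Longrightarrow> subgrp X \<Longrightarrow> Y \<subseteq> Z"
  using int_dsum_commute int_dsum_subset_left by blast

lemma int_dsum_zero_right: "int_dsum X {0} Z \<Longrightarrow> X = Z"
  by (auto simp: int_dsum_def)

section \<open>Internal direct sums and their projections\<close>

definition proj :: "'x::ab_group_add set \<Rightarrow> 'x set \<Rightarrow> 'x \<Rightarrow> 'x" where
  "proj X Y v = (THE x. x \<in> X \<and> v - x \<in> Y)"

locale complementary =
  fixes X Y :: "'x::ab_group_add set"
  assumes subgrp_X: "subgrp X" and subgrp_Y: "subgrp Y" and dsum: "int_dsum X Y UNIV"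
begin

lemma commute: "complementary Y X"
  using subgrp_X subgrp_Y int_dsum_commute[OF dsum] by unfold_locales

lemma inter_zero: "v \<in> X \<Longrightarrow> v \<in> Y \<Longrightarrow> v = 0"
  using int_dsum_inter_zero[OF dsum] .

lemma proj_ex1: "\<exists>!x. x \<in> X \<and> v - x \<in> Y"
proof -
  obtain x y where xy: "v = x + y" "x \<in> X" "y \<in> Y"
    using int_dsum_decompose[OF dsum] by blast
  show ?thesis
  proof (rule ex1I[of _ x])
    show "x \<in> X \<and> v - x \<in> Y"
      using xy by simp
  next
    fix x' assume x': "x' \<in> X \<and> v - x' \<in> Y"
    have "x' - x = (v - x) - (v - x')"
      by simp
    then have "x' - x \<in> Y"
      using x' xy subgrp_Y subgrp_diff by fastforce
    moreover have "x' - x \<in> X"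
      using x' xy subgrp_X subgrp_diff by blast
    ultimately show "x' = x"
      using inter_zero by fastforce
  qed
qed

lemma proj_in: "proj X Y v \<in> X"
  and proj_diff_in: "v - proj X Y v \<in> Y"
  using theI'[OF proj_ex1[of v]] unfolding proj_def by auto

lemma proj_unique: "x \<in> X \<Longrightarrow> v - x \<in> Y \<Longrightarrow> proj X Y v = x"
  using proj_ex1[of v] proj_in proj_diff_in by blast

lemma proj_hom: "is_hom (proj X Y)"
  unfolding is_hom_def
proof (intro allI)
  fix u v
  have "u + v - (proj X Y u + proj X Y v) = (u - proj X Y u) + (v - proj X Y v)"
    by simp
  then show "proj X Y (u + v) = proj X Y u + proj X Y v"
    using proj_in proj_diff_in subgrp_X subgrp_Y
    by (metis proj_unique subgrp_add)
qed

lemma proj_eq_self: "x \<in> X \<Longrightarrow> proj X Y x = x"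
  by (simp add: proj_unique subgrp_0 subgrp_Y)

lemma proj_eq_0_iff: "proj X Y v = 0 \<longleftrightarrow> v \<in> Y"
  using proj_diff_in[of v] proj_unique[of 0 v] subgrp_0[OF subgrp_X] by auto

lemma proj_complement: "proj Y X v = v - proj X Y v"
proof -
  interpret YX: complementary Y X
    by (rule commute)
  show ?thesis
    using proj_in proj_diff_in by (intro YX.proj_unique) simp_all
qed

lemma proj_add_proj: "proj X Y v + proj Y X v = v"
  by (simp add: proj_complement)

end

lemma int_dsum_refine:
  assumes "complementary X0 X1" "subgrp K" "subgrp C" "int_dsum K C X0"
  defines "X1' \<equiv> {u + c | u c. u \<in> X1 \<and> c \<in> C}"
  shows "int_dsum K X1' UNIV" "int_dsum X1 C X1'"
proof -
  interpret complementary X0 X1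
    by (rule assms(1))
  have C_X0: "C \<subseteq> X0" and K_X0: "K \<subseteq> X0"
    using int_dsum_subset_right int_dsum_subset_left assms(2-4) by blast+
  have "X1 \<inter> C = {0}"
    using C_X0 inter_zero subgrp_0[OF subgrp_Y] subgrp_0[OF assms(3)] by blast
  then show "int_dsum X1 C X1'"
    unfolding int_dsum_def X1'_def by simp
  have "k = 0" if "k \<in> K" "k = u + c" "u \<in> X1" "c \<in> C" for k u c
  proof -
    have "u = k - c"
      using that by simp
    then have "u \<in> X0"
      using that K_X0 C_X0 subgrp_diff[OF subgrp_X] by blast
    then have "u = 0"
      using inter_zero that(3) by blast
    then show "k = 0"
      using that int_dsum_inter_zero[OF assms(4)] by simp
  qed
  moreover have "0 \<in> X1'"
    unfolding X1'_def using subgrp_0 assms(3) subgrp_Y by force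
  ultimately have "K \<inter> X1' = {0}"
    unfolding X1'_def using subgrp_0[OF assms(2)] by blast
  moreover have "w \<in> {k + v | k v. k \<in> K \<and> v \<in> X1'}" for w
  proof -
    obtain x0 x1 where w: "w = x0 + x1" "x0 \<in> X0" "x1 \<in> X1"
      using int_dsum_decompose[OF dsum] by blast
    obtain k c where x0: "x0 = k + c" "k \<in> K" "c \<in> C"
      using int_dsum_decompose[OF assms(4) w(2)] by blast
    have "w = k + (x1 + c)"
      using w x0 by (simp add: algebra_simps)
    moreover have "x1 + c \<in> X1'"
      unfolding X1'_def using w x0 by blast
    ultimately show ?thesis
      using x0(2) by blast
  qed
  ultimately show "int_dsum K X1' UNIV"
    unfolding int_dsum_def by blast
qed

lemma int_dsum_kernel_range:
  assumes "is_hom p" "\<And>v. p (p v) = p v" "range p \<subseteq> X" "subgrp X"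
  shows "int_dsum {v \<in> X. p v = 0} (range p) X"
proof -
  have "{v \<in> X. p v = 0} \<inter> range p = {0}"
    using assms(1,2,4) hom_zero subgrp_0 by fastforce
  moreover have "w \<in> {x + y | x y. x \<in> {v \<in> X. p v = 0} \<and> y \<in> range p}" if "w \<in> X" for w
  proof -
    have "p (w - p w) = 0"
      using assms(1,2) by (simp add: hom_diff)
    moreover have "w - p w \<in> X"
      using that assms(3,4) subgrp_diff by blast
    ultimately show ?thesis
      using that by (metis (mono_tags, lifting) diff_add_cancel mem_Collect_eq rangeI)
  qed
  moreover have "{x + y | x y. x \<in> {v \<in> X. p v = 0} \<and> y \<in> range p} \<subseteq> X"
    using assms(3,4) subgrp_add by blast
  ultimately show ?thesis
    unfolding int_dsum_def by blast
qed

lemma bij_betw_sumset: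
  assumes "is_hom d" "subgrp X" "subgrp X'" "bij_betw d X Y" "bij_betw d X' Y'" "Y \<inter> Y' = {0}"
  shows "bij_betw d {u + v | u v. u \<in> X \<and> v \<in> X'} {u + v | u v. u \<in> Y \<and> v \<in> Y'}"
proof -
  have d_eq: "d ` X = Y" "d ` X' = Y'"
    using assms(4,5) by (simp_all add: bij_betw_imp_surj_on)
  have "u + v = 0" if uv: "d (u + v) = 0" "u \<in> X" "v \<in> X'" for u v
  proof -
    have "d u = d (- v)"
      using uv(1) assms(1) by (simp add: hom_add hom_uminus eq_neg_iff_add_eq_0)
    moreover have "d u \<in> Y" "d (- v) \<in> Y'"
      using d_eq uv(2,3) subgrp_uminus[OF assms(3)] by blast+
    ultimately have "d u = d 0" "d (- v) = d 0"
      using assms(1,6) by (auto simp: hom_zero)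
    then have "u = 0" "- v = 0"
      using assms(2-5) uv(2,3) subgrp_0 subgrp_uminus
      by (metis bij_betw_imp_inj_on inj_onD)+
    then show "u + v = 0"
      by simp
  qed
  then have inj: "inj_on d {u + v | u v. u \<in> X \<and> v \<in> X'}"
    using hom_inj_on[OF assms(1) subgrp_sumset[OF assms(2,3)]] by blast
  have "d ` {u + v | u v. u \<in> X \<and> v \<in> X'} = {d u + d v | u v. u \<in> X \<and> v \<in> X'}"
    by (force simp: hom_add[OF assms(1)])
  also have "\<dots> = {u + v | u v. u \<in> Y \<and> v \<in> Y'}"
    unfolding d_eq[symmetric] by blast
  finally show ?thesis
    using inj unfolding bij_betw_def by blast
qed

lemma int_dsum_image:
  assumes "is_hom h" "bij h" "int_dsum X Y UNIV"
  shows "int_dsum (h ` X) (h ` Y) UNIV"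
proof -
  have "h ` X \<inter> h ` Y = h ` (X \<inter> Y)"
    using assms(2) by (simp add: bij_is_inj image_Int)
  also have "\<dots> = {0}"
    using assms(1,3) by (simp add: int_dsum_def hom_zero)
  finally have "h ` X \<inter> h ` Y = {0}" .
  moreover have "w \<in> {x + y | x y. x \<in> h ` X \<and> y \<in> h ` Y}" for w
  proof -
    obtain x y where "inv h w = x + y" "x \<in> X" "y \<in> Y"
      using int_dsum_decompose[OF assms(3)] by blast
    then have "w = h x + h y"
      using assms(1,2) by (metis bij_is_surj hom_add surj_f_inv_f)
    then show ?thesis
      using \<open>x \<in> X\<close> \<open>y \<in> Y\<close> by blast
  qed
  ultimately show ?thesis
    unfolding int_dsum_def by blast
qed

lemma image_eq_of_int_dsum:
  assumes "is_hom h" "bij h" "complementary Y0 Y1"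
    and "h ` X0 \<subseteq> Y0" "h ` X1 \<subseteq> Y1" "int_dsum X0 X1 UNIV"
  shows "h ` X0 = Y0"
proof
  interpret complementary Y0 Y1
    by (rule assms(3))
  show "Y0 \<subseteq> h ` X0"
  proof
    fix y assume "y \<in> Y0"
    obtain x0 x1 where x: "inv h y = x0 + x1" "x0 \<in> X0" "x1 \<in> X1"
      using int_dsum_decompose[OF assms(6)] by blast
    then have y: "y = h x0 + h x1"
      using assms(1,2) by (metis bij_is_surj hom_add surj_f_inv_f)
    have "h x0 \<in> Y0"
      using assms(4) x(2) by blast
    then have "h x1 \<in> Y0"
      using \<open>y \<in> Y0\<close> y subgrp_diff[OF subgrp_X] by (metis add_diff_cancel_left')
    then have "h x1 = 0"
      using assms(5) x(3) inter_zero by blast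
    then show "y \<in> h ` X0"
      using x(2) y by simp
  qed
qed (rule assms(4))

definition dsum_transfer :: "'x::ab_group_add set \<Rightarrow> 'x set \<Rightarrow> 'x set \<Rightarrow> 'x set \<Rightarrow> 'x \<Rightarrow> 'x" where
  "dsum_transfer X0 X1 Y0 Y1 v = proj Y0 Y1 (proj X0 X1 v) + proj Y1 Y0 (proj X1 X0 v)"

context
  fixes X0 X1 Y0 Y1 :: "'x::ab_group_add set"
  assumes X: "complementary X0 X1" and Y: "complementary Y0 Y1"
begin

interpretation X: complementary X0 X1 by (rule X)
interpretation X': complementary X1 X0 by (rule X.commute)
interpretation Y: complementary Y0 Y1 by (rule Y)
interpretation Y': complementary Y1 Y0 by (rule Y.commute)

lemma dsum_transfer_hom: "is_hom (dsum_transfer X0 X1 Y0 Y1)"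
  unfolding is_hom_def dsum_transfer_def
  by (simp add: hom_add[OF X.proj_hom] hom_add[OF X'.proj_hom] hom_add[OF Y.proj_hom]
      hom_add[OF Y'.proj_hom] algebra_simps)

lemma dsum_transfer_image:
  "dsum_transfer X0 X1 Y0 Y1 ` X0 \<subseteq> Y0" "dsum_transfer X0 X1 Y0 Y1 ` X1 \<subseteq> Y1"
proof -
  have "dsum_transfer X0 X1 Y0 Y1 x = proj Y0 Y1 x" if "x \<in> X0" for x
    using that X.proj_eq_self X'.proj_eq_0_iff[THEN iffD2] hom_zero[OF Y'.proj_hom]
    by (simp add: dsum_transfer_def)
  then show "dsum_transfer X0 X1 Y0 Y1 ` X0 \<subseteq> Y0"
    using Y.proj_in by auto
  have "dsum_transfer X0 X1 Y0 Y1 x = proj Y1 Y0 x" if "x \<in> X1" for x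
    using that X'.proj_eq_self X.proj_eq_0_iff[THEN iffD2] hom_zero[OF Y.proj_hom]
    by (simp add: dsum_transfer_def)
  then show "dsum_transfer X0 X1 Y0 Y1 ` X1 \<subseteq> Y1"
    using Y'.proj_in by auto
qed

lemma dsum_transfer_inj:
  assumes "X0 \<inter> Y1 = {0}" "X1 \<inter> Y0 = {0}"
  shows "inj (dsum_transfer X0 X1 Y0 Y1)"
proof (rule hom_inj_on[OF dsum_transfer_hom subgrp_UNIV])
  fix v assume "dsum_transfer X0 X1 Y0 Y1 v = 0"
  then have sum0: "proj Y0 Y1 (proj X0 X1 v) = - proj Y1 Y0 (proj X1 X0 v)"
    by (simp add: dsum_transfer_def eq_neg_iff_add_eq_0)
  then have "proj Y0 Y1 (proj X0 X1 v) \<in> Y1"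
    using Y'.proj_in subgrp_uminus[OF Y.subgrp_Y] by simp
  then have "proj Y0 Y1 (proj X0 X1 v) = 0"
    using Y.proj_in Y.inter_zero by blast
  moreover from this have "proj Y1 Y0 (proj X1 X0 v) = 0"
    using sum0 by simp
  ultimately have "proj X0 X1 v \<in> X0 \<inter> Y1" "proj X1 X0 v \<in> X1 \<inter> Y0"
    using X.proj_in X'.proj_in Y.proj_eq_0_iff Y'.proj_eq_0_iff by blast+
  then show "v = 0"
    using assms X.proj_add_proj[of v] by simp
qed

end

section \<open>Idempotent powers of self-maps of finite types\<close>

lemma funpow_idempotent_exists:
  fixes \<phi> :: "'a::finite \<Rightarrow> 'a"
  obtains N where "0 < N" "\<And>v. (\<phi> ^^ N) ((\<phi> ^^ N) v) = (\<phi> ^^ N) v"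
proof -
  have "\<not> inj (\<lambda>n::nat. \<phi> ^^ n)"
    using finite_imageD[of "\<lambda>n::nat. \<phi> ^^ n" UNIV] by auto
  then obtain i j where "i < j" "\<phi> ^^ i = \<phi> ^^ j"
    unfolding inj_def by (metis linorder_neqE_nat)
  define p where "p = j - i"
  have shift: "\<phi> ^^ (n + p) = \<phi> ^^ n" if "i \<le> n" for n
  proof -
    have "\<phi> ^^ (n + p) = \<phi> ^^ (n - i) \<circ> \<phi> ^^ j"
      using that \<open>i < j\<close> by (simp add: p_def flip: funpow_add)
    also have "\<dots> = \<phi> ^^ (n - i) \<circ> \<phi> ^^ i"
      by (simp add: \<open>\<phi> ^^ i = \<phi> ^^ j\<close>)
    also have "\<dots> = \<phi> ^^ n"
      using that by (simp flip: funpow_add)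
    finally show ?thesis .
  qed
  have periodic: "\<phi> ^^ (n + k * p) = \<phi> ^^ n" if "i \<le> n" for n k
  proof (induction k)
    case (Suc k)
    have "\<phi> ^^ (n + Suc k * p) = \<phi> ^^ ((n + k * p) + p)"
      by (simp add: algebra_simps)
    then show ?case
      using shift[of "n + k * p"] Suc that by simp
  qed simp
  define N where "N = Suc i * p"
  have "Suc i \<le> N"
    using mult_le_mono2[of 1 p "Suc i"] \<open>i < j\<close> by (simp add: N_def p_def)
  then have "i < N"
    by simp
  then have "\<phi> ^^ N \<circ> \<phi> ^^ N = \<phi> ^^ N"
    using periodic[of N "Suc i"] by (simp add: N_def flip: funpow_add)
  then show thesis
    using that \<open>i < N\<close> by (metis comp_apply gr_zeroI less_zeroE)
qed

lemma funpow_map_prod: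
  fixes \<phi> :: "'a \<Rightarrow> 'a" and \<psi> :: "'b \<Rightarrow> 'b"
  shows "(map_prod \<phi> \<psi> ^^ n) (v, b) = ((\<phi> ^^ n) v, (\<psi> ^^ n) b)"
  by (induction n) simp_all

lemma funpow_idempotent_exists_pair:
  fixes \<phi> :: "'a::finite \<Rightarrow> 'a" and \<psi> :: "'b::finite \<Rightarrow> 'b"
  obtains N where "0 < N" "\<And>v. (\<phi> ^^ N) ((\<phi> ^^ N) v) = (\<phi> ^^ N) v"
    "\<And>b. (\<psi> ^^ N) ((\<psi> ^^ N) b) = (\<psi> ^^ N) b"
proof -
  obtain N where "0 < N"
    and idem: "\<And>x. (map_prod \<phi> \<psi> ^^ N) ((map_prod \<phi> \<psi> ^^ N) x) = (map_prod \<phi> \<psi> ^^ N) x"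
    using funpow_idempotent_exists by blast
  have "(\<phi> ^^ N) ((\<phi> ^^ N) v) = (\<phi> ^^ N) v \<and> (\<psi> ^^ N) ((\<psi> ^^ N) b) = (\<psi> ^^ N) b" for v b
    using idem[of "(v, b)"] by (simp add: funpow_map_prod)
  then show thesis
    using that \<open>0 < N\<close> by blast
qed

lemma bij_betw_range_funpow:
  fixes \<phi> :: "'a::ab_group_add \<Rightarrow> 'a" and \<psi> :: "'b::ab_group_add \<Rightarrow> 'b"
  assumes "is_hom d" "is_hom \<phi>" and comm: "\<And>v. d (\<phi> v) = \<psi> (d v)"
    and ker: "\<And>v. d v = 0 \<Longrightarrow> \<phi> v = 0" and ran: "range \<psi> \<subseteq> d ` range \<phi>"
    and "0 < N" and idem: "\<And>v. (\<phi> ^^ N) ((\<phi> ^^ N) v) = (\<phi> ^^ N) v"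
  shows "bij_betw d (range (\<phi> ^^ N)) (range (\<psi> ^^ N))"
proof -
  obtain M where "N = Suc M"
    using \<open>0 < N\<close> gr0_conv_Suc by blast
  then have \<phi>N: "(\<phi> ^^ N) v = (\<phi> ^^ M) (\<phi> v)" and \<psi>N: "(\<psi> ^^ N) b = (\<psi> ^^ M) (\<psi> b)" for v b
    by (simp_all add: funpow_swap1)
  have "c = 0" if "c \<in> range (\<phi> ^^ N)" "d c = 0" for c
  proof -
    have "c = (\<phi> ^^ M) (\<phi> c)"
      using that(1) idem \<phi>N by auto
    then show "c = 0"
      using ker[OF that(2)] hom_zero[OF hom_funpow[OF assms(2)]] by simp
  qed
  then have "inj_on d (range (\<phi> ^^ N))"
    using hom_inj_on[OF assms(1) subgrp_range[OF hom_funpow[OF assms(2)]]] by blast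
  moreover have "d ` range (\<phi> ^^ N) = range (\<psi> ^^ N)"
  proof
    show "d ` range (\<phi> ^^ N) \<subseteq> range (\<psi> ^^ N)"
      using funpow_commute[of d \<phi> \<psi>] comm by auto
    show "range (\<psi> ^^ N) \<subseteq> d ` range (\<phi> ^^ N)"
    proof
      fix b assume "b \<in> range (\<psi> ^^ N)"
      then obtain b' where b': "b = (\<psi> ^^ M) (\<psi> b')"
        using \<psi>N by blast
      obtain a where "\<psi> b' = d (\<phi> a)"
        using ran by blast
      then have "b = d ((\<phi> ^^ N) a)"
        using b' funpow_commute[of d \<phi> \<psi>, OF comm] \<phi>N by simp
      then show "b \<in> d ` range (\<phi> ^^ N)"
        by blast
    qed
  qed
  ultimately show ?thesis
    unfolding bij_betw_def by blast
qed

section \<open>Decompositions with an isomorphism part\<close>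

lemma Dec_I_iff:
  "((A0, B0), (A1, B1)) \<in> Dec_I d \<longleftrightarrow>
     subgrp A0 \<and> subgrp B0 \<and> subgrp A1 \<and> subgrp B1 \<and> d ` A0 \<subseteq> B0 \<and> d ` A1 \<subseteq> B1 \<and>
     int_dsum A0 A1 UNIV \<and> int_dsum B0 B1 UNIV \<and> bij_betw d A1 B1"
  by (auto simp: Dec_I_def Dec_def is_restriction_def)

lemma Dec_I_maxD: "x \<in> Dec_I_max d \<Longrightarrow> x \<in> Dec_I d"
  by (simp add: Dec_I_max_def)

locale Dec_I_elem =
  fixes d :: "'a::ab_group_add \<Rightarrow> 'b::ab_group_add" and A0 B0 A1 B1
  assumes hom: "is_hom d" and mem_Dec_I: "((A0, B0), (A1, B1)) \<in> Dec_I d"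
begin

lemma image_A0: "d ` A0 \<subseteq> B0"
  and image_A1: "d ` A1 \<subseteq> B1"
  and bij_A1: "bij_betw d A1 B1"
  using mem_Dec_I by (simp_all add: Dec_I_iff)

sublocale A: complementary A0 A1
  using mem_Dec_I by unfold_locales (simp_all add: Dec_I_iff)

sublocale A': complementary A1 A0
  by (rule A.commute)

sublocale B: complementary B0 B1
  using mem_Dec_I by unfold_locales (simp_all add: Dec_I_iff)

sublocale B': complementary B1 B0
  by (rule B.commute)

lemma d_proj0: "d (proj A0 A1 a) = proj B0 B1 (d a)"
proof (rule B.proj_unique[symmetric])
  show "d (proj A0 A1 a) \<in> B0"
    using A.proj_in image_A0 by blast
  show "d a - d (proj A0 A1 a) \<in> B1"
    using A.proj_diff_in image_A1 hom by (metis hom_diff image_subset_iff)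
qed

lemma d_proj1: "d (proj A1 A0 a) = proj B1 B0 (d a)"
  using d_proj0 hom by (simp add: A.proj_complement B.proj_complement hom_diff)

lemma section_exists:
  obtains s where "is_hom s" "\<And>b. d (s b) = proj B1 B0 b" "\<And>a. s (d a) = proj A1 A0 a"
proof -
  define s where "s b = the_inv_into A1 d (proj B1 B0 b)" for b
  have s_in: "s b \<in> A1" for b
    unfolding s_def using bij_betw_the_inv_into[OF bij_A1] B'.proj_in bij_betwE by blast
  have d_s: "d (s b) = proj B1 B0 b" for b
    unfolding s_def using f_the_inv_into_f_bij_betw[OF bij_A1] B'.proj_in by blast
  have inj: "u = v" if "u \<in> A1" "v \<in> A1" "d u = d v" for u v
    using bij_A1 that by (metis bij_betw_imp_inj_on inj_onD)
  have "is_hom s"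
    unfolding is_hom_def
  proof (intro allI)
    fix b c
    have "d (s (b + c)) = d (s b + s c)"
      using hom d_s B'.proj_hom by (simp add: hom_add)
    then show "s (b + c) = s b + s c"
      using inj s_in A'.subgrp_X subgrp_add by blast
  qed
  moreover have "s (d a) = proj A1 A0 a" for a
    using inj[OF s_in A'.proj_in] d_s d_proj1 by simp
  ultimately show thesis
    using that d_s by blast
qed

context
  fixes p :: "'a \<Rightarrow> 'a" and s :: "'b \<Rightarrow> 'b"
  assumes hom_p: "is_hom p" and hom_s: "is_hom s"
    and p_idem: "\<And>v. p (p v) = p v" and s_idem: "\<And>b. s (s b) = s b"
    and d_p: "\<And>v. d (p v) = s (d v)" and range_p: "range p \<subseteq> A0"
    and bij_p: "bij_betw d (range p) (range s)"
begin

lemma enlarge_by_idempotent: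
  "\<exists>y \<in> Dec_I d. dec_le d ((A0, B0), (A1, B1)) y \<and> fst (fst y) = {v \<in> A0. p v = 0}"
proof -
  define K where "K = {v \<in> A0. p v = 0}"
  define L where "L = {b \<in> B0. s b = 0}"
  define A1' where "A1' = {u + c | u c. u \<in> A1 \<and> c \<in> range p}"
  define B1' where "B1' = {u + e | u e. u \<in> B1 \<and> e \<in> range s}"
  have range_s: "range s \<subseteq> B0"
    using bij_betw_imp_surj_on[OF bij_p] range_p image_A0 by blast
  have K: "int_dsum K (range p) A0" and L: "int_dsum L (range s) B0"
    unfolding K_def L_def
    using int_dsum_kernel_range hom_p p_idem range_p A.subgrp_X hom_s s_idem range_s B.subgrp_X
    by blast+
  have subgrps: "subgrp K" "subgrp L" "subgrp (range p)" "subgrp (range s)"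
    unfolding K_def L_def
    using subgrp_kernel subgrp_range hom_p hom_s A.subgrp_X B.subgrp_X by blast+
  have A_refine: "int_dsum K A1' UNIV" "int_dsum A1 (range p) A1'"
    unfolding A1'_def by (rule int_dsum_refine[OF A.complementary_axioms subgrps(1,3) K])+
  have B_refine: "int_dsum L B1' UNIV" "int_dsum B1 (range s) B1'"
    unfolding B1'_def by (rule int_dsum_refine[OF B.complementary_axioms subgrps(2,4) L])+
  have "d ` K \<subseteq> L"
    unfolding K_def L_def using image_A0 d_p hom by (auto simp: hom_zero simp flip: d_p)
  moreover have "B1 \<inter> range s = {0}"
    using range_s B.inter_zero subgrp_0[OF B.subgrp_Y] subgrp_0[OF subgrps(4)] by blast
  then have bij: "bij_betw d A1' B1'"
    unfolding A1'_def B1'_def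
    using bij_betw_sumset[OF hom A.subgrp_Y subgrps(3) bij_A1 bij_p] by blast
  moreover have "subgrp A1'" "subgrp B1'"
    unfolding A1'_def B1'_def using subgrp_sumset A.subgrp_Y B.subgrp_Y subgrps by blast+
  ultimately have "((K, L), (A1', B1')) \<in> Dec_I d"
    unfolding Dec_I_iff using subgrps A_refine B_refine bij_betw_imp_surj_on by blast
  moreover have "is_restriction d (range p, range s)"
    unfolding is_restriction_def using subgrps bij_betw_imp_surj_on[OF bij_p] by simp
  then have "dec_le d ((A0, B0), (A1, B1)) ((K, L), (A1', B1'))"
    unfolding dec_le_def using K L A_refine B_refine by auto
  ultimately show ?thesis
    unfolding K_def by auto
qed

lemma idempotent_vanishes_if_max:
  assumes "((A0, B0), (A1, B1)) \<in> Dec_I_max d"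
  shows "p v = 0"
proof -
  obtain y where "y \<in> Dec_I d" "dec_le d ((A0, B0), (A1, B1)) y" "fst (fst y) = {v \<in> A0. p v = 0}"
    using enlarge_by_idempotent by blast
  moreover from this have "y = ((A0, B0), (A1, B1))"
    using assms unfolding Dec_I_max_def by blast
  ultimately have "A0 = {v \<in> A0. p v = 0}"
    by simp
  then show "p v = 0"
    using range_p p_idem by (metis (mono_tags, lifting) mem_Collect_eq range_subsetD)
qed

end

end

lemma Dec_I_max_inter_zero:
  fixes d :: "'a::{ab_group_add, finite} \<Rightarrow> 'b::{ab_group_add, finite}"
  assumes "is_hom d" "((A0, B0), (A1, B1)) \<in> Dec_I_max d" "((A0', B0'), (A1', B1')) \<in> Dec_I d"
  shows "A0 \<inter> A1' = {0}"
proof -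
  interpret x: Dec_I_elem d A0 B0 A1 B1
    using assms(1) Dec_I_maxD[OF assms(2)] by unfold_locales
  interpret y: Dec_I_elem d A0' B0' A1' B1'
    using assms(1,3) by unfold_locales
  define \<phi> where "\<phi> = proj A0 A1 \<circ> proj A1' A0'"
  define \<psi> where "\<psi> = proj B0 B1 \<circ> proj B1' B0'"
  have hom_\<phi>: "is_hom \<phi>" and hom_\<psi>: "is_hom \<psi>"
    unfolding \<phi>_def \<psi>_def
    by (simp_all add: hom_comp x.A.proj_hom y.A'.proj_hom x.B.proj_hom y.B'.proj_hom)
  have comm: "d (\<phi> v) = \<psi> (d v)" for v
    by (simp add: \<phi>_def \<psi>_def x.d_proj0 y.d_proj1)
  have ker: "\<phi> v = 0" if "d v = 0" for v
  proof -
    have "d (proj A1' A0' v) = d 0"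
      using that y.d_proj1 hom_zero[OF y.B'.proj_hom] hom_zero[OF y.hom] by simp
    then have "proj A1' A0' v = 0"
      using y.bij_A1 y.A'.proj_in subgrp_0[OF y.A.subgrp_Y] by (metis bij_betw_imp_inj_on inj_onD)
    then show "\<phi> v = 0"
      by (simp add: \<phi>_def hom_zero[OF x.A.proj_hom])
  qed
  have ran: "range \<psi> \<subseteq> d ` range \<phi>"
  proof
    fix b assume "b \<in> range \<psi>"
    then obtain b' where "b = \<psi> b'"
      by blast
    moreover obtain a where "a \<in> A1'" "proj B1' B0' b' = d a"
      using y.B'.proj_in bij_betw_imp_surj_on[OF y.bij_A1] by blast
    ultimately have "b = d (\<phi> a)"
      by (simp add: \<phi>_def \<psi>_def x.d_proj0 y.A'.proj_eq_self)
    then show "b \<in> d ` range \<phi>"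
      by blast
  qed
  obtain N where "0 < N" and idem: "\<And>v. (\<phi> ^^ N) ((\<phi> ^^ N) v) = (\<phi> ^^ N) v"
    "\<And>b. (\<psi> ^^ N) ((\<psi> ^^ N) b) = (\<psi> ^^ N) b"
    using funpow_idempotent_exists_pair by blast
  have "range (\<phi> ^^ N) \<subseteq> A0"
    using \<open>0 < N\<close> x.A.proj_in by (auto simp: \<phi>_def gr0_conv_Suc)
  then have vanish: "(\<phi> ^^ N) v = 0" for v
    using x.idempotent_vanishes_if_max[OF hom_funpow[OF hom_\<phi>] hom_funpow[OF hom_\<psi>] idem
        funpow_commute[of d \<phi> \<psi>, OF comm] _
        bij_betw_range_funpow[OF assms(1) hom_\<phi> comm ker ran \<open>0 < N\<close> idem(1)] assms(2)]
    by blast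
  have "a = 0" if "a \<in> A0" "a \<in> A1'" for a
  proof -
    have "\<phi> a = a"
      using that by (simp add: \<phi>_def x.A.proj_eq_self y.A'.proj_eq_self)
    then have "(\<phi> ^^ N) a = a"
      by (induction N) simp_all
    then show "a = 0"
      using vanish by simp
  qed
  then show ?thesis
    using subgrp_0[OF x.A.subgrp_X] subgrp_0[OF y.A.subgrp_Y] by blast
qed

section \<open>The action of \<open>U\<^sup>*(d)\<close>\<close>

definition act_alpha :: "('a::ab_group_add \<Rightarrow> 'b::ab_group_add) \<Rightarrow> ('b \<Rightarrow> 'a) \<Rightarrow> 'a \<Rightarrow> 'a" where
  "act_alpha d f = (\<lambda>a. a + f (d a))"

definition act_beta :: "('a::ab_group_add \<Rightarrow> 'b::ab_group_add) \<Rightarrow> ('b \<Rightarrow> 'a) \<Rightarrow> 'b \<Rightarrow> 'b" where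
  "act_beta d f = (\<lambda>b. b + d (f b))"

lemma act_eq:
  "act d q ((A0, B0), (A1, B1)) =
     ((act_alpha d (snd q) ` A0, act_beta d (snd q) ` B0),
      (act_alpha d (snd q) ` A1, act_beta d (snd q) ` B1))"
  by (simp add: act_def act_alpha_def act_beta_def Let_def)

lemma hom_act_alpha: "is_hom d \<Longrightarrow> is_hom f \<Longrightarrow> is_hom (act_alpha d f)"
  by (simp add: is_hom_def act_alpha_def algebra_simps)

lemma hom_act_beta: "is_hom d \<Longrightarrow> is_hom f \<Longrightarrow> is_hom (act_beta d f)"
  by (simp add: is_hom_def act_beta_def algebra_simps)

lemma d_act_alpha: "is_hom d \<Longrightarrow> d (act_alpha d f a) = act_beta d f (d a)"
  by (simp add: act_alpha_def act_beta_def hom_add)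

lemma zsmul_1: "zsmul 1 x = x"
  by (simp add: zsmul_def)

lemma act_alpha_qmult:
  "is_hom d \<Longrightarrow> is_hom g \<Longrightarrow>
     act_alpha d g \<circ> act_alpha d f = act_alpha d (snd (qmult d (1, g) (1, f)))"
  by (simp add: fun_eq_iff act_alpha_def qmult_def zsmul_1 hom_add algebra_simps)

lemma act_beta_qmult:
  "is_hom d \<Longrightarrow> is_hom g \<Longrightarrow>
     act_beta d g \<circ> act_beta d f = act_beta d (snd (qmult d (1, g) (1, f)))"
  by (simp add: fun_eq_iff act_beta_def qmult_def zsmul_1 hom_add algebra_simps)

lemma Ustar_bij:
  assumes "is_hom d" "q \<in> Ustar d"
  shows "bij (act_alpha d (snd q))" "bij (act_beta d (snd q))"
proof -
  obtain f where q: "q = (1, f)"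
    using assms(2) by (cases q) (simp add: Ustar_def)
  obtain n g where "is_hom f" "is_hom g" "qmult d (1, f) (n, g) = qone" "qmult d (n, g) (1, f) = qone"
    using assms(2) unfolding q Ustar_def Q_carrier_def by auto
  moreover from this have "n = 1"
    by (simp add: qmult_def qone_def)
  ultimately have fg: "qmult d (1, f) (1, g) = qone" and gf: "qmult d (1, g) (1, f) = qone"
    and "is_hom f" "is_hom g"
    by simp_all
  have unit: "act_alpha d (snd qone) = id" "act_beta d (snd qone) = id"
    using assms(1) by (simp_all add: qone_def act_alpha_def act_beta_def id_def hom_zero)
  have "act_alpha d f \<circ> act_alpha d g = id" "act_beta d f \<circ> act_beta d g = id"
    using act_alpha_qmult[OF assms(1) \<open>is_hom f\<close>, of g] act_beta_qmult[OF assms(1) \<open>is_hom f\<close>, of g]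
    by (simp_all add: fg unit)
  moreover have "act_alpha d g \<circ> act_alpha d f = id" "act_beta d g \<circ> act_beta d f = id"
    using act_alpha_qmult[OF assms(1) \<open>is_hom g\<close>, of f] act_beta_qmult[OF assms(1) \<open>is_hom g\<close>, of f]
    by (simp_all add: gf unit)
  ultimately
  show "bij (act_alpha d (snd q))" "bij (act_beta d (snd q))"
    unfolding q by (auto intro: o_bij)
qed

lemma Ustar_if_bij:
  assumes "is_hom d" "is_hom f" "bij (act_alpha d f)"
  shows "(1, f) \<in> Ustar d"
proof -
  define \<alpha> where "\<alpha> = act_alpha d f"
  define g where "g b = - inv \<alpha> (f b)" for b
  have hom_inv_\<alpha>: "is_hom (inv \<alpha>)"
    unfolding \<alpha>_def using hom_inv hom_act_alpha assms by blast
  have \<alpha>_inv: "\<alpha> (inv \<alpha> y) = y" and inv_\<alpha>: "inv \<alpha> (\<alpha> y) = y" for y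
    using assms(3) unfolding \<alpha>_def by (simp_all add: bij_is_surj surj_f_inv_f bij_is_inj)
  have "is_hom g"
    unfolding g_def is_hom_def using hom_inv_\<alpha> assms(2) by (simp add: hom_add)
  moreover have "g b + f b + f (d (g b)) = 0" for b
    using \<alpha>_inv[of "f b"] assms(1,2)
    by (simp add: g_def \<alpha>_def act_alpha_def hom_uminus algebra_simps)
  moreover have "f b + g b + g (d (f b)) = 0" for b
    using inv_\<alpha>[of "f b"] hom_add[OF hom_inv_\<alpha>]
    by (simp add: g_def \<alpha>_def act_alpha_def algebra_simps)
  ultimately show ?thesis
    using assms(2) unfolding Ustar_def Q_carrier_def
    by (auto simp: qmult_def qone_def zsmul_1 fun_eq_iff intro!: bexI[of _ "(1, g)"])
qed

lemma Dec_I_image: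
  assumes "is_hom d" "is_hom \<alpha>" "bij \<alpha>" "is_hom \<beta>" "bij \<beta>" "\<And>a. d (\<alpha> a) = \<beta> (d a)"
    and "((A0, B0), (A1, B1)) \<in> Dec_I d"
  shows "((\<alpha> ` A0, \<beta> ` B0), (\<alpha> ` A1, \<beta> ` B1)) \<in> Dec_I d"
proof -
  interpret Dec_I_elem d A0 B0 A1 B1
    using assms(1,7) by unfold_locales
  have d_image: "d ` \<alpha> ` S = \<beta> ` d ` S" for S
    using assms(6) by (simp add: image_image)
  have "bij_betw (\<beta> \<circ> d) A1 (\<beta> ` B1)"
    using bij_A1 assms(5) by (meson bij_betw_subset bij_betw_trans subset_UNIV)
  then have "bij_betw d (\<alpha> ` A1) (\<beta> ` B1)"
    using bij_betw_comp_iff[of \<alpha> A1 "\<alpha> ` A1" d "\<beta> ` B1"] assms(3,6)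
    by (simp add: bij_betw_subset comp_def)
  moreover have "d ` \<alpha> ` A0 \<subseteq> \<beta> ` B0" "d ` \<alpha> ` A1 \<subseteq> \<beta> ` B1"
    unfolding d_image using image_A0 image_A1 by (simp_all add: image_mono)
  ultimately show ?thesis
    unfolding Dec_I_iff
    using subgrp_image[OF assms(2) A.subgrp_X] subgrp_image[OF assms(2) A.subgrp_Y]
      subgrp_image[OF assms(4) B.subgrp_X] subgrp_image[OF assms(4) B.subgrp_Y]
      int_dsum_image[OF assms(2,3) A.dsum] int_dsum_image[OF assms(4,5) B.dsum]
    by blast
qed

lemma act_in_Dec_I:
  assumes "is_hom d" "q \<in> Ustar d" "x \<in> Dec_I d"
  shows "act d q x \<in> Dec_I d"
proof -
  obtain A0 B0 A1 B1 where x: "x = ((A0, B0), (A1, B1))"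
    by (metis prod.collapse)
  have hom_f: "is_hom (snd q)"
    using assms(2) by (simp add: Ustar_def Q_carrier_def)
  show ?thesis
    unfolding x act_eq
    by (rule Dec_I_image[OF assms(1) hom_act_alpha[OF assms(1) hom_f] Ustar_bij(1)[OF assms(1,2)]
          hom_act_beta[OF assms(1) hom_f] Ustar_bij(2)[OF assms(1,2)] d_act_alpha[OF assms(1)]
          assms(3)[unfolded x]])
qed

lemma card_act:
  assumes "is_hom d" "q \<in> Ustar d"
  shows "card (fst (snd (act d q x))) = card (fst (snd x))"
proof -
  obtain A0 B0 A1 B1 where x: "x = ((A0, B0), (A1, B1))"
    by (metis prod.collapse)
  have "inj_on (act_alpha d (snd q)) A1"
    using bij_is_inj[OF Ustar_bij(1)[OF assms]] by (rule inj_on_subset) simp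
  then show ?thesis
    unfolding x act_eq by (simp add: card_image)
qed

lemma dec_le_eq_if_card_le:
  fixes d :: "'a::{ab_group_add, finite} \<Rightarrow> 'b::{ab_group_add, finite}"
  assumes "is_hom d" "((A0, B0), (A1, B1)) \<in> Dec_I d" "((A0', B0'), (A1', B1')) \<in> Dec_I d"
    and le: "dec_le d ((A0, B0), (A1, B1)) ((A0', B0'), (A1', B1'))" and "card A1' \<le> card A1"
  shows "((A0', B0'), (A1', B1')) = ((A0, B0), (A1, B1))"
proof -
  interpret x: Dec_I_elem d A0 B0 A1 B1
    using assms(1,2) by unfold_locales
  interpret y: Dec_I_elem d A0' B0' A1' B1'
    using assms(1,3) by unfold_locales
  obtain C D where CD: "is_restriction d (C, D)" "int_dsum A0' C A0" "int_dsum B0' D B0"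
    "int_dsum A1 C A1'" "int_dsum B1 D B1'"
    using le unfolding dec_le_def by auto
  have "subgrp C" "subgrp D"
    using CD(1) by (simp_all add: is_restriction_def)
  have "A1 \<subseteq> A1'"
    by (rule int_dsum_subset_left[OF CD(4) \<open>subgrp C\<close>])
  then have A1: "A1' = A1"
    using card_seteq[OF finite, of A1 A1'] \<open>card A1' \<le> card A1\<close> by simp
  then have B1: "B1' = B1"
    using bij_betw_imp_surj_on[OF x.bij_A1] bij_betw_imp_surj_on[OF y.bij_A1] by simp
  have "C \<subseteq> A0" "C \<subseteq> A1" "D \<subseteq> B0" "D \<subseteq> B1"
    using int_dsum_subset_right[OF CD(2) y.A.subgrp_X] int_dsum_subset_right[OF CD(4) x.A.subgrp_Y]
      int_dsum_subset_right[OF CD(3) y.B.subgrp_X] int_dsum_subset_right[OF CD(5) x.B.subgrp_Y] A1 B1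
    by simp_all
  then have "C = {0}" "D = {0}"
    using x.A.inter_zero x.B.inter_zero subgrp_0[OF \<open>subgrp C\<close>] subgrp_0[OF \<open>subgrp D\<close>]
    by blast+
  then have "A0' = A0" "B0' = B0"
    using CD(2,3) int_dsum_zero_right by blast+
  then show ?thesis
    using A1 B1 by simp
qed

lemma Dec_I_max_if_card_max:
  fixes d :: "'a::{ab_group_add, finite} \<Rightarrow> 'b::{ab_group_add, finite}"
  assumes "is_hom d" "x \<in> Dec_I d"
    and card_max: "\<And>y. y \<in> Dec_I d \<Longrightarrow> card (fst (snd y)) \<le> card (fst (snd x))"
  shows "x \<in> Dec_I_max d"
proof -
  have "y = x" if "y \<in> Dec_I d" "dec_le d x y" for y
    using dec_le_eq_if_card_le[OF assms(1)] assms(2) that card_max[OF that(1)]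
    by (metis prod.collapse)
  then show ?thesis
    using assms(2) by (simp add: Dec_I_max_def)
qed

lemma Dec_I_transition:
  assumes "is_hom d" "((A0, B0), (A1, B1)) \<in> Dec_I d" "((A0', B0'), (A1', B1')) \<in> Dec_I d"
  obtains f where "is_hom f"
    "act_alpha d f = dsum_transfer A0 A1 A0' A1'" "act_beta d f = dsum_transfer B0 B1 B0' B1'"
proof -
  interpret x: Dec_I_elem d A0 B0 A1 B1
    using assms(1,2) by unfold_locales
  interpret y: Dec_I_elem d A0' B0' A1' B1'
    using assms(1,3) by unfold_locales
  obtain s where s: "is_hom s" "\<And>b. d (s b) = proj B1 B0 b" "\<And>a. s (d a) = proj A1 A0 a"
    using x.section_exists by blast
  obtain s' where s': "is_hom s'" "\<And>b. d (s' b) = proj B1' B0' b" "\<And>a. s' (d a) = proj A1' A0' a"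
    using y.section_exists by blast
  define f where "f b = - (s' (proj B0 B1 b) + proj A0' A1' (s b))" for b
  have "is_hom f"
    unfolding f_def is_hom_def
    using s(1) s'(1) x.B.proj_hom y.A.proj_hom by (simp add: hom_add algebra_simps)
  moreover have "act_alpha d f = dsum_transfer A0 A1 A0' A1'"
    using y.A.proj_hom
    by (simp add: fun_eq_iff act_alpha_def f_def dsum_transfer_def s(3) s'(3) x.d_proj0[symmetric]
        x.A.proj_complement y.A.proj_complement hom_diff)
  moreover have "act_beta d f = dsum_transfer B0 B1 B0' B1'"
    using y.B.proj_hom x.hom
    by (simp add: fun_eq_iff act_beta_def f_def dsum_transfer_def s(2) s'(2) y.d_proj0 hom_add hom_uminus
        x.B.proj_complement y.B.proj_complement hom_diff)
  ultimately show thesis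
    using that by blast
qed

lemma Dec_I_max_orbit:
  fixes d :: "'a::{ab_group_add, finite} \<Rightarrow> 'b::{ab_group_add, finite}"
  assumes "is_hom d" "x \<in> Dec_I_max d" "y \<in> Dec_I_max d"
  shows "\<exists>q \<in> Ustar d. act d q x = y"
proof -
  obtain A0 B0 A1 B1 A0' B0' A1' B1' where xy: "x = ((A0, B0), (A1, B1))" "y = ((A0', B0'), (A1', B1'))"
    by (metis prod.collapse)
  note assms = assms[unfolded xy]
  interpret x: Dec_I_elem d A0 B0 A1 B1
    using assms(1) Dec_I_maxD[OF assms(2)] by unfold_locales
  interpret y: Dec_I_elem d A0' B0' A1' B1'
    using assms(1) Dec_I_maxD[OF assms(3)] by unfold_locales
  obtain f where f: "is_hom f"
    "act_alpha d f = dsum_transfer A0 A1 A0' A1'" "act_beta d f = dsum_transfer B0 B1 B0' B1'"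
    by (rule Dec_I_transition[OF assms(1) Dec_I_maxD[OF assms(2)] Dec_I_maxD[OF assms(3)]])
  have "A0 \<inter> A1' = {0}" "A1 \<inter> A0' = {0}"
    using Dec_I_max_inter_zero[OF assms(1,2) Dec_I_maxD[OF assms(3)]]
      Dec_I_max_inter_zero[OF assms(1,3) Dec_I_maxD[OF assms(2)]]
    by (simp_all add: Int_commute)
  then have "inj (act_alpha d f)"
    unfolding f(2) by (rule dsum_transfer_inj[OF x.A.complementary_axioms y.A.complementary_axioms])
  then have bij_\<alpha>: "bij (act_alpha d f)"
    by (simp add: bij_def finite_UNIV_inj_surj)
  then have "(1, f) \<in> Ustar d"
    by (rule Ustar_if_bij[OF assms(1) f(1)])
  then have bij_\<beta>: "bij (act_beta d f)"
    using Ustar_bij(2)[OF assms(1)] by fastforce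
  note hom_\<alpha> = hom_act_alpha[OF assms(1) f(1)] and hom_\<beta> = hom_act_beta[OF assms(1) f(1)]
  note transfer_A = dsum_transfer_image[OF x.A.complementary_axioms y.A.complementary_axioms,
      folded f(2)]
    and transfer_B = dsum_transfer_image[OF x.B.complementary_axioms y.B.complementary_axioms,
      folded f(3)]
  have "act_alpha d f ` A0 = A0'" "act_alpha d f ` A1 = A1'"
    "act_beta d f ` B0 = B0'" "act_beta d f ` B1 = B1'"
    using image_eq_of_int_dsum[OF hom_\<alpha> bij_\<alpha> y.A.complementary_axioms transfer_A x.A.dsum]
      image_eq_of_int_dsum[OF hom_\<alpha> bij_\<alpha> y.A'.complementary_axioms transfer_A(2,1) x.A'.dsum]
      image_eq_of_int_dsum[OF hom_\<beta> bij_\<beta> y.B.complementary_axioms transfer_B x.B.dsum]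
      image_eq_of_int_dsum[OF hom_\<beta> bij_\<beta> y.B'.complementary_axioms transfer_B(2,1) x.B'.dsum]
    by simp_all
  then show ?thesis
    using \<open>(1, f) \<in> Ustar d\<close> unfolding xy by (intro bexI[of _ "(1, f)"]) (simp_all add: act_eq)
qed

theorem proposition4p8:
  fixes d :: "'a::{ab_group_add, finite} \<Rightarrow> 'b::{ab_group_add, finite}"
  assumes "is_hom d"
  shows "\<exists>x \<in> Dec_I d. Dec_I_max d = (\<lambda>q. act d q x) ` Ustar d"
proof -
  have "((UNIV, UNIV), ({0}, {0})) \<in> Dec_I d"
    using assms by (simp add: Dec_I_iff subgrp_UNIV subgrp_zero int_dsum_def hom_zero bij_betw_def)
  then obtain x where x: "x \<in> Dec_I d"
    and card_max: "\<And>y. y \<in> Dec_I d \<Longrightarrow> card (fst (snd y)) \<le> card (fst (snd x))"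
    using ex_has_greatest_nat[of "\<lambda>x. x \<in> Dec_I d" _ "\<lambda>x. card (fst (snd x))" "Suc (card (UNIV :: 'a set))"]
    by (metis card_mono finite le_imp_less_Suc subset_UNIV)
  have "x \<in> Dec_I_max d"
    using Dec_I_max_if_card_max[OF assms x card_max] .
  moreover have "act d q x \<in> Dec_I_max d" if "q \<in> Ustar d" for q
    using Dec_I_max_if_card_max[OF assms act_in_Dec_I[OF assms that x]] card_max
    by (simp add: card_act[OF assms that])
  ultimately have "Dec_I_max d = (\<lambda>q. act d q x) ` Ustar d"
    using Dec_I_max_orbit[OF assms] by blast
  then show ?thesis
    using x by blast
qed

end
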